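(* Let $d\ge 10$ and $a>0$, and let $u=u(a,\cdot)$ be the solution of $$y^{2}(1-y^{2})u''+\big((d-3)y-2y^{3}\big)u'+(d-2)u(1-u^{2})=0$$ with $u(y)=1-ay^{2}+O(y^{4})$ as $y\to0$. Then $u$ is monotone decreasing on $[0,1]$, from $u(0)=1$ to $u(1)>0$, where $u(1):=\lim_{y\to1^-}u(y)$.
   Context: For each $a\ge0$ there is a unique solution $u(a,y)$ of the equation, analytic in $(a,y)$ near $y=0$, with expansion $u(a,y)=1-ay^2+O(y^4)$ near $y=0$. This solution extends to a solution on $[0,1)$ with $|u|<1$ for $a>0$, and the limits $\lim_{y\to1^-}u(a,y)$ and $\lim_{y\to1^-}u'(a,y)$ exist and are finite; $u(1)$ and $u'(1)$ denote these limits. *)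

theory Defs
  imports "HOL-Analysis.Analysis" "HOL-Library.Landau_Symbols"
begin

end

theory Submission
  imports Defs
begin

text \<open>In divergence form the equation reads \<open>(w u')' = - w F\<close> with
  \<open>w = y^(d - 3) / (1 - y\<^sup>2)^((d - 5)/2)\<close> and
  \<open>F = (d - 2) u (1 - u\<^sup>2) / (y\<^sup>2 (1 - y\<^sup>2))\<close>. The expansion at \<open>0\<close> makes \<open>F\<close> positive and
  bounded near \<open>0\<close>, so the flux \<open>w u'\<close> decreases there; since \<open>w \<le> C y\<^sup>2\<close>, a flux not
  tending to \<open>0\<close> would force \<open>u\<close> to blow up like \<open>1/y\<close>. Hence \<open>- C y^(d - 2) \<le> w u' < 0\<close>,
  i.e. \<open>- C y \<le> u' < 0\<close>, near \<open>0\<close>. The invariant \<open>u < 1\<close>, \<open>u' < 0\<close>, \<open>(y\<^sup>3 u)' > 0\<close> then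
  propagates to all of \<open>(0, 1)\<close>: at a first point of failure either \<open>u' = 0\<close>, where the
  equation forces \<open>u'' < 0\<close>, or \<open>y u' + 3 u = 0\<close>, where it forces \<open>(y u' + 3 u)' > 0\<close>;
  either way the invariant already fails just to the left. Finally \<open>y\<^sup>3 u\<close> increasing
  keeps \<open>u\<close> away from \<open>0\<close> near \<open>1\<close>.\<close>

lemma deriv_ge_inverse_square_imp_unbounded_below:
  fixes f f' :: "real \<Rightarrow> real"
  assumes y1: "0 < y1" and c: "0 < c"
    and der: "\<And>y. 0 < y \<Longrightarrow> y \<le> y1 \<Longrightarrow> (f has_real_derivative f' y) (at y)"
    and ge: "\<And>y. 0 < y \<Longrightarrow> y \<le> y1 \<Longrightarrow> c / y\<^sup>2 \<le> f' y"
  shows "\<exists>y. 0 < y \<and> y \<le> y1 \<and> f y < B"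
proof -
  have nondecr: "f y + c / y \<le> f y1 + c / y1" if y: "0 < y" "y \<le> y1" for y
  proof -
    have "(\<lambda>t. f t + c / t) y \<le> (\<lambda>t. f t + c / t) y1"
    proof (rule DERIV_nonneg_imp_nondecreasing[OF y(2)])
      fix x assume x: "y \<le> x" "x \<le> y1"
      then have x0: "0 < x" using y by simp
      have "((\<lambda>t. f t + c / t) has_real_derivative f' x - c / x\<^sup>2) (at x)"
        using der[OF x0 x(2)] x0
        by (auto intro!: derivative_eq_intros simp: power2_eq_square field_simps)
      then show "\<exists>l. ((\<lambda>t. f t + c / t) has_real_derivative l) (at x) \<and> 0 \<le> l"
        using ge[OF x0 x(2)] by force
    qed
    then show ?thesis by simp
  qed
  define R where "R = \<bar>f y1 + c / y1 - B\<bar> + 1"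
  have R: "0 < R" by (simp add: R_def add_nonneg_pos)
  define y where "y = min y1 (c / R)"
  have y: "0 < y" "y \<le> y1" using y1 c R by (auto simp: y_def)
  have "y \<le> c / R" by (simp add: y_def)
  then have "R \<le> c / y" using y R c by (simp add: field_simps)
  then have "f y < B" using nondecr[OF y] unfolding R_def by linarith
  then show ?thesis using y by blast
qed

lemma interval_induct_from_left:
  fixes P :: "real \<Rightarrow> bool"
  assumes start: "a < \<delta>" "\<And>t. a < t \<Longrightarrow> t < \<delta> \<Longrightarrow> P t"
    and limit: "\<And>s. a < s \<Longrightarrow> s < b \<Longrightarrow> (\<And>t. a < t \<Longrightarrow> t < s \<Longrightarrow> P t) \<Longrightarrow> P s"
    and propagate: "\<And>s. a < s \<Longrightarrow> s < b \<Longrightarrow> P s \<Longrightarrow> eventually P (at_right s)"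
    and y: "a < y" "y < b"
  shows "P y"
proof (rule ccontr)
  define S where "S = {t. a < t \<and> t < b \<and> \<not> P t}"
  assume "\<not> P y"
  then have yS: "y \<in> S" using y by (simp add: S_def)
  have \<delta>_le: "\<delta> \<le> t" if "t \<in> S" for t
    using start(2)[of t] that by (force simp: S_def)
  then have bdd: "bdd_below S" by (auto simp: bdd_below_def)
  define s where "s = Inf S"
  have s_le: "s \<le> t" if "t \<in> S" for t
    using cInf_lower[OF that bdd] by (simp add: s_def)
  have "\<delta> \<le> s" unfolding s_def using yS \<delta>_le by (intro cInf_greatest) auto
  then have s: "a < s" "s < b" using start(1) s_le[OF yS] y by auto
  have "P t" if "a < t" "t < s" for t
    using s_le[of t] that s by (force simp: S_def)
  then have "P s" using limit[OF s] by blast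
  then obtain c where c: "s < c" and Pc: "\<And>t. s < t \<Longrightarrow> t < c \<Longrightarrow> P t"
    using propagate[OF s] unfolding eventually_at_right_field by blast
  have "c \<le> t" if t: "t \<in> S" for t
    using s_le[OF t] Pc[of t] t \<open>P s\<close> by (force simp: S_def)
  then have "c \<le> s" unfolding s_def using yS by (intro cInf_greatest) auto
  then show False using c by simp
qed

lemma DERIV_pos_imp_less_left:
  fixes f :: "real \<Rightarrow> real"
  assumes "(f has_real_derivative l) (at x)" "0 < l" "a < x"
  shows "\<exists>t. a < t \<and> t < x \<and> f t < f x"
proof -
  obtain e where "0 < e" and e: "\<And>h. 0 < h \<Longrightarrow> h < e \<Longrightarrow> f (x - h) < f x"
    using DERIV_pos_inc_left[OF assms(1,2)] by blast
  define h where "h = min (e / 2) ((x - a) / 2)"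
  have "0 < h" "h < e" "h < x - a" using \<open>0 < e\<close> assms(3) by (auto simp: h_def min_def)
  then show ?thesis using e[of h] by (intro exI[of _ "x - h"]) auto
qed

lemma antimono_bounded_tendsto_at_left:
  fixes f :: "real \<Rightarrow> real"
  assumes ab: "a < b"
    and dec: "\<And>x y. a < x \<Longrightarrow> x \<le> y \<Longrightarrow> y < b \<Longrightarrow> f y \<le> f x"
    and bound: "\<And>x. a < x \<Longrightarrow> x < b \<Longrightarrow> c \<le> f x"
  shows "\<exists>L. (f \<longlongrightarrow> L) (at_left b) \<and> c \<le> L"
proof -
  define L where "L = Inf (f ` {a<..<b})"
  have bdd: "bdd_below (f ` {a<..<b})"
    unfolding bdd_below_def using bound by (intro exI[of _ c]) auto
  have "c \<le> L" unfolding L_def using ab bound by (intro cInf_greatest) auto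
  moreover have "(f \<longlongrightarrow> L) (at_left b)"
  proof (rule decreasing_tendsto)
    show "eventually (\<lambda>t. L \<le> f t) (at_left b)"
      using eventually_at_left_real[OF ab]
      by eventually_elim (auto simp: L_def intro: cInf_lower[OF _ bdd])
    fix x assume "L < x"
    then obtain s where s: "a < s" "s < b" "f s < x"
      unfolding L_def using cInf_less_iff[OF _ bdd] ab by auto
    show "eventually (\<lambda>t. f t < x) (at_left b)"
      using eventually_at_left_real[OF \<open>s < b\<close>]
      by eventually_elim (use s in \<open>force intro: le_less_trans[OF dec]\<close>)
  qed
  ultimately show ?thesis by blast
qed

locale self_similar_profile =
  fixes d :: nat and a :: real and u u' u'' :: "real \<Rightarrow> real"
  assumes d: "d \<ge> 10" and a: "a > 0"
    and u0: "u 0 = 1"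
    and d1: "\<And>y. y \<in> {0<..<1} \<Longrightarrow> (u has_real_derivative u' y) (at y)"
    and d2: "\<And>y. y \<in> {0<..<1} \<Longrightarrow> (u' has_real_derivative u'' y) (at y)"
    and ode: "\<And>y. y \<in> {0<..<1} \<Longrightarrow>
      y\<^sup>2 * (1 - y\<^sup>2) * u'' y + ((real d - 3) * y - 2 * y ^ 3) * u' y
        + (real d - 2) * u y * (1 - (u y)\<^sup>2) = 0"
    and expn: "(\<lambda>y. u y - (1 - a * y\<^sup>2)) \<in> O[at_right 0](\<lambda>y. y ^ 4)"
begin

definition weight :: "real \<Rightarrow> real" where
  "weight y = y ^ (d - 3) / (1 - y\<^sup>2) powr ((real d - 5) / 2)"

definition weight_bound :: real where
  "weight_bound = 1 / (3 / 4) powr ((real d - 5) / 2)"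

definition forcing :: "real \<Rightarrow> real" where
  "forcing y = (real d - 2) * u y * (1 - (u y)\<^sup>2) / (y\<^sup>2 * (1 - y\<^sup>2))"

definition flux :: "real \<Rightarrow> real" where
  "flux y = weight y * u' y"

lemma u_near_zero:
  "\<exists>\<delta>>0. \<delta> \<le> 1/2 \<and> (\<forall>y. 0 < y \<and> y < \<delta> \<longrightarrow>
     0 < 1 - u y \<and> 1 - u y \<le> 3 * a * y\<^sup>2 / 2 \<and> 1/2 \<le> u y)"
proof -
  obtain C where C: "C > 0"
    and ev: "eventually (\<lambda>y. norm (u y - (1 - a * y\<^sup>2)) \<le> C * norm (y ^ 4)) (at_right 0)"
    using landau_o.bigE[OF expn] by blast
  then obtain b where b: "b > 0"
    and hb: "\<And>y. 0 < y \<Longrightarrow> y < b \<Longrightarrow> \<bar>u y - (1 - a * y\<^sup>2)\<bar> \<le> C * y ^ 4"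
    unfolding eventually_at_right_field by auto
  define \<delta> where "\<delta> = min b (min (1/2) (min (a / (2 * C)) (1 / (3 * a))))"
  have "\<delta> > 0" using b C a by (simp add: \<delta>_def)
  show ?thesis
  proof (intro exI[of _ \<delta>] conjI allI impI)
    show "\<delta> > 0" "\<delta> \<le> 1/2" using \<open>\<delta> > 0\<close> by (auto simp: \<delta>_def)
    fix y assume y: "0 < y \<and> y < \<delta>"
    then have "y < b" "y < 1/2" "y < a / (2 * C)" "y < 1 / (3 * a)"
      by (auto simp: \<delta>_def)
    have err: "\<bar>u y - (1 - a * y\<^sup>2)\<bar> \<le> C * y ^ 4" using hb y \<open>y < b\<close> by auto
    have "y\<^sup>2 \<le> y" using y \<open>y < 1/2\<close> by (simp add: power2_eq_square mult_le_cancel_right1)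
    then have "C * y\<^sup>2 \<le> C * y" using C by simp
    also have "\<dots> \<le> a / 2" using \<open>y < a / (2 * C)\<close> C by (simp add: field_simps)
    finally have "C * y\<^sup>2 * y\<^sup>2 \<le> a / 2 * y\<^sup>2"
      by (rule mult_right_mono) simp
    then have "C * y ^ 4 \<le> a / 2 * y\<^sup>2"
      by (simp add: power2_eq_square power4_eq_xxxx mult.assoc)
    moreover have "3 * a * y\<^sup>2 \<le> 1"
    proof -
      have "3 * a * y\<^sup>2 \<le> 3 * a * y" using \<open>y\<^sup>2 \<le> y\<close> a by simp
      also have "\<dots> \<le> 1" using \<open>y < 1 / (3 * a)\<close> a by (simp add: field_simps)
      finally show ?thesis .
    qed
    moreover have "0 < a * y\<^sup>2" using a y by simp
    ultimately show "0 < 1 - u y" "1 - u y \<le> 3 * a * y\<^sup>2 / 2" "1/2 \<le> u y"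
      using err by auto
  qed
qed

lemma forcing_near_zero:
  "\<exists>\<delta>>0. \<delta> \<le> 1/2 \<and> (\<forall>y. 0 < y \<and> y < \<delta> \<longrightarrow>
     0 < forcing y \<and> forcing y \<le> 4 * a * (real d - 2) \<and> 1/2 \<le> u y \<and> u y < 1)"
proof -
  obtain \<delta> where \<delta>: "\<delta> > 0" "\<delta> \<le> 1/2" and near: "\<And>y. 0 < y \<Longrightarrow> y < \<delta> \<Longrightarrow>
      0 < 1 - u y \<and> 1 - u y \<le> 3 * a * y\<^sup>2 / 2 \<and> 1/2 \<le> u y"
    using u_near_zero by blast
  show ?thesis
  proof (intro exI[of _ \<delta>] conjI allI impI)
    show "\<delta> > 0" "\<delta> \<le> 1/2" using \<delta> by auto
    fix y assume y: "0 < y \<and> y < \<delta>"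
    have b: "0 < 1 - u y" "1 - u y \<le> 3 * a * y\<^sup>2 / 2" "1/2 \<le> u y" using near y by auto
    have yp: "y\<^sup>2 > 0" using y by simp
    have s: "3/4 \<le> 1 - y\<^sup>2"
    proof -
      have "y\<^sup>2 \<le> (1/2)\<^sup>2" using y \<delta> by (intro power_mono) auto
      then show ?thesis by (simp add: power2_eq_square)
    qed
    have factor: "u y * (1 - (u y)\<^sup>2) = (u y * (1 + u y)) * (1 - u y)"
      by (simp add: power2_eq_square algebra_simps)
    have p1: "0 < u y * (1 + u y)" using b by simp
    have p2: "u y * (1 + u y) \<le> 2"
      using mult_mono[of "u y" 1 "1 + u y" 2] b by simp
    have pos: "0 < u y * (1 - (u y)\<^sup>2)" unfolding factor using p1 b by simp
    have le: "u y * (1 - (u y)\<^sup>2) \<le> 2 * (3 * a * y\<^sup>2 / 2)"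
      unfolding factor using p1 p2 b by (intro mult_mono) auto
    have dd: "real d - 2 > 0" using d by simp
    have den: "y\<^sup>2 * (1 - y\<^sup>2) > 0" using yp s by simp
    have Fe: "forcing y = (real d - 2) * (u y * (1 - (u y)\<^sup>2)) / (y\<^sup>2 * (1 - y\<^sup>2))"
      unfolding forcing_def by (simp add: mult.assoc)
    show "0 < forcing y" unfolding Fe using dd pos den by simp
    have "forcing y \<le> (real d - 2) * (2 * (3 * a * y\<^sup>2 / 2)) / (y\<^sup>2 * (3/4))"
      unfolding Fe using dd le yp s a by (intro frac_le) auto
    also have "\<dots> = 4 * a * (real d - 2)" using yp by (simp add: field_simps)
    finally show "forcing y \<le> 4 * a * (real d - 2)" .
    show "1/2 \<le> u y" "u y < 1" using b by auto
  qed
qed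

lemma weight_has_derivative:
  assumes y: "0 < y" "y < 1"
  shows "(weight has_real_derivative
           weight y * ((real d - 3) / y + (real d - 5) * y / (1 - y\<^sup>2))) (at y)"
proof -
  define e where "e = (real d - 5) / 2"
  have s: "1 - y\<^sup>2 > 0" using y by (simp add: abs_square_less_1)
  define P where "P = (1 - y\<^sup>2) powr e"
  have P: "P > 0" using s by (simp add: P_def)
  have 1: "((\<lambda>y. (1 - y\<^sup>2) powr e) has_real_derivative
             e * (1 - y\<^sup>2) powr (e - of_nat 1) * (0 - 2 * y)) (at y)"
    by (rule DERIV_fun_powr[where g="\<lambda>y. 1 - y\<^sup>2", OF _ s]) (auto intro!: derivative_eq_intros)
  have pe: "(1 - y\<^sup>2) powr (e - of_nat 1) = P / (1 - y\<^sup>2)"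
    using s by (simp add: P_def powr_diff)
  have 2: "((\<lambda>y. y ^ (d - 3)) has_real_derivative real (d - 3) * y ^ (d - 3 - 1)) (at y)"
    by (auto intro!: derivative_eq_intros)
  have q: "(weight has_real_derivative
      (real (d - 3) * y ^ (d - 3 - 1) * P - (e * P / (1 - y\<^sup>2) * (0 - 2 * y)) * y ^ (d - 3))
        / P ^ Suc (Suc 0)) (at y)"
    unfolding weight_def[abs_def] e_def[symmetric] using DERIV_quotient[OF 2 1] P pe
    by (simp add: P_def)
  have yy: "y ^ (d - 3) = y * y ^ (d - 3 - 1)"
    using d power_Suc[of y "d - 3 - 1"] by (simp add: Suc_diff_Suc numeral_3_eq_3)
  have rd: "real (d - 3) = real d - 3" using d by (simp add: of_nat_diff)
  have "(real (d - 3) * y ^ (d - 3 - 1) * P - (e * P / (1 - y\<^sup>2) * (0 - 2 * y)) * y ^ (d - 3))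
        / P ^ Suc (Suc 0)
      = weight y * ((real d - 3) / y + (real d - 5) * y / (1 - y\<^sup>2))"
    unfolding weight_def e_def[symmetric] P_def[symmetric] yy rd using y s P
    by (simp add: e_def field_simps power2_eq_square)
  with q show ?thesis by simp
qed

lemma ode_normal_form:
  assumes y: "0 < y" "y < 1"
  shows "u'' y + ((real d - 3) / y + (real d - 5) * y / (1 - y\<^sup>2)) * u' y = - forcing y"
proof -
  have s: "1 - y\<^sup>2 > 0" using y by (simp add: abs_square_less_1)
  then have yp: "y\<^sup>2 * (1 - y\<^sup>2) > 0" using y by simp
  have "(u'' y + ((real d - 3) / y + (real d - 5) * y / (1 - y\<^sup>2)) * u' y) * (y\<^sup>2 * (1 - y\<^sup>2))
     = y\<^sup>2 * (1 - y\<^sup>2) * u'' y + ((real d - 3) * y - 2 * y ^ 3) * u' y"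
    using y s by (simp add: field_simps power2_eq_square power3_eq_cube)
  also have "\<dots> = - ((real d - 2) * u y * (1 - (u y)\<^sup>2))"
    using ode[of y] y by simp
  also have "\<dots> = - forcing y * (y\<^sup>2 * (1 - y\<^sup>2))"
    using yp unfolding forcing_def by (simp add: field_simps)
  finally show ?thesis using yp by (metis mult_right_cancel less_irrefl)
qed

lemma flux_has_derivative:
  assumes y: "0 < y" "y < 1"
  shows "(flux has_real_derivative - weight y * forcing y) (at y)"
proof -
  have "(flux has_real_derivative weight y * u'' y
          + weight y * ((real d - 3) / y + (real d - 5) * y / (1 - y\<^sup>2)) * u' y) (at y)"
    unfolding flux_def[abs_def] using y d2 by (intro DERIV_mult' weight_has_derivative) auto
  moreover have "weight y * u'' y
          + weight y * ((real d - 3) / y + (real d - 5) * y / (1 - y\<^sup>2)) * u' y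
        = weight y * (u'' y + ((real d - 3) / y + (real d - 5) * y / (1 - y\<^sup>2)) * u' y)"
    by (simp add: algebra_simps)
  ultimately show ?thesis
    using ode_normal_form[OF y] by simp
qed

lemma weight_pos: "0 < y \<Longrightarrow> y < 1 \<Longrightarrow> 0 < weight y"
  using abs_square_less_1[of y] by (simp add: weight_def)

lemma weight_bounds:
  assumes y: "0 < y" "y \<le> 1/2"
  shows "y ^ (d - 3) \<le> weight y" "weight y \<le> weight_bound * y ^ (d - 3)"
proof -
  have s: "3/4 \<le> 1 - y\<^sup>2" "1 - y\<^sup>2 \<le> 1"
  proof -
    have "y\<^sup>2 \<le> (1/2)\<^sup>2" using y by (intro power_mono) auto
    then show "3/4 \<le> 1 - y\<^sup>2" by (simp add: power2_eq_square)
  qed simp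
  have e: "0 \<le> (real d - 5) / 2" using d by simp
  have P1: "(1 - y\<^sup>2) powr ((real d - 5) / 2) \<le> 1" using s e by (intro powr_le1) auto
  have P2: "(3/4) powr ((real d - 5) / 2) \<le> (1 - y\<^sup>2) powr ((real d - 5) / 2)"
    using s e by (intro powr_mono2) auto
  have Pp: "0 < (1 - y\<^sup>2) powr ((real d - 5) / 2)" using s by simp
  have yp: "0 < y ^ (d - 3)" using y by simp
  show "y ^ (d - 3) \<le> weight y" unfolding weight_def using P1 Pp yp by (simp add: field_simps)
  show "weight y \<le> weight_bound * y ^ (d - 3)" unfolding weight_def weight_bound_def using P2 Pp yp
    by (simp add: field_simps mult_left_mono)
qed

lemma weight_le_square: "0 < y \<Longrightarrow> y \<le> 1/2 \<Longrightarrow> weight y \<le> weight_bound * y\<^sup>2"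
proof -
  assume y: "0 < y" "y \<le> 1/2"
  have "y ^ (d - 3) \<le> y\<^sup>2" using d y power_decreasing[of 2 "d - 3" y] by auto
  moreover have "0 < weight_bound" by (simp add: weight_bound_def)
  ultimately show ?thesis using weight_bounds(2)[OF y] by (meson mult_left_mono order_trans less_imp_le)
qed

context
  fixes \<delta> M :: real
  assumes \<delta>: "0 < \<delta>" "\<delta> \<le> 1/2"
    and near_zero: "\<And>y. 0 < y \<Longrightarrow> y < \<delta> \<Longrightarrow>
      0 < forcing y \<and> forcing y \<le> M \<and> 1/2 \<le> u y \<and> u y < 1"
begin

lemma flux_strict_decreasing_near_zero:
  assumes "0 < s" "s < t" "t < \<delta>"
  shows "flux t < flux s"
proof (rule DERIV_neg_imp_decreasing[OF \<open>s < t\<close>])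
  fix x assume "s \<le> x" "x \<le> t"
  then have x: "0 < x" "x < \<delta>" "x < 1" using assms \<delta> by auto
  have "- weight x * forcing x < 0" using weight_pos[of x] near_zero[of x] x by simp
  then show "\<exists>l. (flux has_real_derivative l) (at x) \<and> l < 0"
    using flux_has_derivative[of x] x by blast
qed

lemma flux_nonpos_near_zero:
  assumes y: "0 < y" "y < \<delta>"
  shows "flux y \<le> 0"
proof (rule ccontr)
  assume "\<not> flux y \<le> 0"
  have "0 < flux y / weight_bound" using \<open>\<not> flux y \<le> 0\<close> by (simp add: weight_bound_def)
  have "\<exists>t. 0 < t \<and> t \<le> y \<and> u t < 1/2"
  proof (rule deriv_ge_inverse_square_imp_unbounded_below[where c = "flux y / weight_bound" and f' = u'])
    fix t assume t: "0 < t" "t \<le> y"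
    then have t1: "t < 1" "t \<le> 1/2" using y \<delta> by auto
    show "(u has_real_derivative u' t) (at t)" using d1 t t1 by auto
    have "flux y \<le> flux t" using t flux_strict_decreasing_near_zero[of t y] y by (cases "t = y") auto
    have "flux y / weight_bound / t\<^sup>2 = flux y / (weight_bound * t\<^sup>2)" by simp
    also have "\<dots> \<le> flux y / weight t"
      using weight_le_square[OF t(1) t1(2)] weight_pos[OF t(1) t1(1)] \<open>\<not> flux y \<le> 0\<close>
      by (intro divide_left_mono) auto
    also have "\<dots> \<le> flux t / weight t"
      using \<open>flux y \<le> flux t\<close> weight_pos[OF t(1) t1(1)] by (intro divide_right_mono) auto
    finally show "flux y / weight_bound / t\<^sup>2 \<le> u' t"
      using weight_pos[OF t(1) t1(1)] by (simp add: flux_def)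
  qed (use y \<open>0 < flux y / weight_bound\<close> in auto)
  then show False using near_zero y by force
qed

lemma near_zero_bound_pos: "0 < weight_bound * M"
  using near_zero[of "\<delta> / 2"] \<delta> by (simp add: weight_bound_def)

lemma flux_plus_power_nondecreasing_near_zero:
  assumes "0 < t" "t \<le> y" "y < \<delta>"
  shows "flux t + weight_bound * M * t ^ (d - 2) \<le> flux y + weight_bound * M * y ^ (d - 2)"
proof -
  define K where "K = weight_bound * M"
  have K: "0 < K" using near_zero_bound_pos by (simp add: K_def)
  have "(\<lambda>t. flux t + K * t ^ (d - 2)) t \<le> (\<lambda>t. flux t + K * t ^ (d - 2)) y"
  proof (rule DERIV_nonneg_imp_nondecreasing[OF \<open>t \<le> y\<close>])
    fix x assume x: "t \<le> x" "x \<le> y"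
    then have x0: "0 < x" "x < 1" "x \<le> 1/2" "x < \<delta>" using assms \<delta> by auto
    have "weight x * forcing x \<le> weight_bound * x ^ (d - 3) * M"
      using weight_bounds(2)[OF x0(1,3)] near_zero[OF x0(1,4)] weight_pos[OF x0(1,2)]
      by (intro mult_mono) auto
    also have "\<dots> = K * x ^ (d - 3)" by (simp add: K_def)
    also have "\<dots> \<le> K * (real (d - 2) * x ^ (d - 3))"
      using K mult_right_mono[of 1 "real (d - 2)" "x ^ (d - 3)"] d x0 by simp
    finally have "0 \<le> - weight x * forcing x + K * (real (d - 2) * x ^ (d - 2 - Suc 0))"
      by (simp add: numeral_3_eq_3)
    moreover have "((\<lambda>t. flux t + K * t ^ (d - 2)) has_real_derivative
        - weight x * forcing x + K * (real (d - 2) * x ^ (d - 2 - Suc 0))) (at x)"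
      by (intro DERIV_add flux_has_derivative[OF x0(1,2)] DERIV_cmult DERIV_pow)
    ultimately show "\<exists>l. ((\<lambda>t. flux t + K * t ^ (d - 2)) has_real_derivative l) (at x) \<and> 0 \<le> l"
      by blast
  qed
  then show ?thesis by (simp add: K_def)
qed

lemma flux_lower_bound_near_zero:
  assumes y: "0 < y" "y < \<delta>"
  shows "- (weight_bound * M) * y ^ (d - 2) \<le> flux y"
proof (rule ccontr)
  define K where "K = weight_bound * M"
  have K: "0 < K" using near_zero_bound_pos by (simp add: K_def)
  assume "\<not> - (weight_bound * M) * y ^ (d - 2) \<le> flux y"
  then have gap: "0 < - (flux y + K * y ^ (d - 2))" by (simp add: K_def)
  have below: "flux t \<le> flux y + K * y ^ (d - 2)" if t: "0 < t" "t \<le> y" for t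
    using flux_plus_power_nondecreasing_near_zero[OF t y(2)] K t
    by (smt (verit, best) K_def mult_nonneg_nonneg zero_le_power)
  have "\<exists>t. 0 < t \<and> t \<le> y \<and> - u t < -1"
  proof (rule deriv_ge_inverse_square_imp_unbounded_below
      [where c = "- (flux y + K * y ^ (d - 2)) / weight_bound" and f' = "\<lambda>t. - u' t"])
    show "0 < - (flux y + K * y ^ (d - 2)) / weight_bound"
      using gap by (simp add: weight_bound_def)
    fix t assume t: "0 < t" "t \<le> y"
    then have t1: "t < 1" "t \<le> 1/2" using y \<delta> by auto
    have w: "0 < weight t" using weight_pos[OF t(1) t1(1)] .
    show "((\<lambda>t. - u t) has_real_derivative - u' t) (at t)"
      using d1 t t1 by (auto intro: DERIV_minus)
    have "- (flux y + K * y ^ (d - 2)) / weight_bound / t\<^sup>2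
        = - (flux y + K * y ^ (d - 2)) / (weight_bound * t\<^sup>2)" by simp
    also have "\<dots> \<le> - (flux y + K * y ^ (d - 2)) / weight t"
      using weight_le_square[OF t(1) t1(2)] w gap by (intro divide_left_mono) auto
    also have "\<dots> \<le> - flux t / weight t"
      using below[OF t] w by (intro divide_right_mono) auto
    finally show "- (flux y + K * y ^ (d - 2)) / weight_bound / t\<^sup>2 \<le> - u' t"
      using w by (simp add: flux_def)
  qed (use y in auto)
  then show False using near_zero y by force
qed

lemma u'_bounds_near_zero:
  assumes y: "0 < y" "y < \<delta>"
  shows "- (weight_bound * M) * y \<le> u' y" "u' y < 0"
proof -
  have y1: "y < 1" "y \<le> 1/2" using y \<delta> by auto
  have w: "0 < weight y" using weight_pos[OF y(1) y1(1)] .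
  have "flux y < flux (y / 2)" using flux_strict_decreasing_near_zero[of "y / 2" y] y by simp
  also have "\<dots> \<le> 0" using flux_nonpos_near_zero[of "y / 2"] y by simp
  finally show "u' y < 0" using w by (simp add: flux_def mult_less_0_iff)
  have "0 \<le> weight_bound * M" using near_zero_bound_pos by simp
  have "d - 2 = Suc (d - 3)" using d by simp
  then have "y ^ (d - 2) = y * y ^ (d - 3)" by simp
  moreover have "y * y ^ (d - 3) \<le> y * weight y"
    using weight_bounds(1)[OF y(1) y1(2)] y by simp
  ultimately have "- (weight_bound * M) * y * weight y \<le> - (weight_bound * M) * y ^ (d - 2)"
    using mult_left_mono[OF _ \<open>0 \<le> weight_bound * M\<close>] by (simp add: mult.assoc)
  also have "\<dots> \<le> u' y * weight y"
    using flux_lower_bound_near_zero[OF y] by (simp add: flux_def mult.commute)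
  finally show "- (weight_bound * M) * y \<le> u' y"
    using w mult_le_cancel_right_pos[of "weight y" "- (weight_bound * M * y)" "u' y"] by simp
qed

end

definition cube_rate :: "real \<Rightarrow> real" where
  "cube_rate y = y * u' y + 3 * u y"

definition invariant :: "real \<Rightarrow> bool" where
  "invariant y \<longleftrightarrow> u y < 1 \<and> u' y < 0 \<and> 0 < cube_rate y"

lemma invariant_near_zero: "\<exists>\<delta>>0. \<forall>y. 0 < y \<longrightarrow> y < \<delta> \<longrightarrow> invariant y"
proof -
  obtain \<delta> where \<delta>: "0 < \<delta>" "\<delta> \<le> 1/2" and near: "\<And>y. 0 < y \<Longrightarrow> y < \<delta> \<Longrightarrow>
      0 < forcing y \<and> forcing y \<le> 4 * a * (real d - 2) \<and> 1/2 \<le> u y \<and> u y < 1"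
    using forcing_near_zero by blast
  define K where "K = weight_bound * (4 * a * (real d - 2))"
  have K: "0 < K" using a d by (simp add: K_def weight_bound_def)
  show ?thesis
  proof (intro exI[of _ "min \<delta> (1 / (K + 1))"] conjI allI impI)
    show "0 < min \<delta> (1 / (K + 1))" using \<delta> K by simp
    fix y assume "0 < y" "y < min \<delta> (1 / (K + 1))"
    then have y: "0 < y" "y < \<delta>" "y < 1 / (K + 1)" by auto
    note u' = u'_bounds_near_zero[OF \<delta> near y(1,2), folded K_def]
    have "K * y < 1" using y K by (simp add: field_simps)
    moreover have "- (K * y * y) \<le> y * u' y"
      using mult_left_mono[OF u'(1), of y] y by (simp add: algebra_simps)
    moreover have "K * y * y \<le> K * y" using y \<delta> K by (simp add: mult_le_cancel_left1)
    moreover have "1/2 \<le> u y" using near y by simp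
    ultimately have "0 < cube_rate y" unfolding cube_rate_def by linarith
    then show "invariant y" using near y u'(2) by (simp add: invariant_def)
  qed
qed

lemma cube_rate_has_derivative:
  "0 < y \<Longrightarrow> y < 1 \<Longrightarrow> (cube_rate has_real_derivative 4 * u' y + y * u'' y) (at y)"
  unfolding cube_rate_def[abs_def] using d1 d2
  by (auto intro!: derivative_eq_intros simp: algebra_simps)

lemma cube_has_derivative:
  "0 < y \<Longrightarrow> y < 1 \<Longrightarrow> ((\<lambda>t. t ^ 3 * u t) has_real_derivative y\<^sup>2 * cube_rate y) (at y)"
  using d1 by (auto intro!: derivative_eq_intros
      simp: cube_rate_def algebra_simps power2_eq_square power3_eq_cube)

lemma cube_nondecreasing:
  assumes "0 < x" "x \<le> y" "y < 1" and rate: "\<And>t. x \<le> t \<Longrightarrow> t \<le> y \<Longrightarrow> 0 \<le> cube_rate t"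
  shows "x ^ 3 * u x \<le> y ^ 3 * u y"
proof -
  have "(\<lambda>t. t ^ 3 * u t) x \<le> (\<lambda>t. t ^ 3 * u t) y"
  proof (rule DERIV_nonneg_imp_nondecreasing[OF \<open>x \<le> y\<close>])
    fix t assume t: "x \<le> t" "t \<le> y"
    then show "\<exists>l. ((\<lambda>t. t ^ 3 * u t) has_real_derivative l) (at t) \<and> 0 \<le> l"
      using cube_has_derivative[of t] rate[OF t] assms by force
  qed
  then show ?thesis by simp
qed

lemma u_pos_if_invariant: "0 < y \<Longrightarrow> invariant y \<Longrightarrow> 0 < u y"
  unfolding invariant_def cube_rate_def using mult_pos_neg[of y "u' y"] by linarith

text \<open>This is the only place where \<open>d \<ge> 10\<close> enters: at a zero of \<open>cube_rate\<close> the equation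
  gives \<open>y (1 - y\<^sup>2) cube_rate' y = u y (3d - 15 - 6(1 - y\<^sup>2) - (d - 2)(1 - u\<^sup>2))\<close>, and the
  bracket is at least \<open>2d - 19\<close>.\<close>

lemma cube_rate_derivative_pos:
  assumes y: "0 < y" "y < 1" and zero: "cube_rate y = 0" and pos: "0 < u y"
  shows "0 < 4 * u' y + y * u'' y"
proof -
  define s where "s = 1 - y\<^sup>2"
  have s: "0 < s" "s \<le> 1" using y by (auto simp: s_def abs_square_less_1)
  have u': "y * u' y = - 3 * u y" using zero by (simp add: cube_rate_def)
  have "y * (4 * u' y + y * u'' y) * s = 4 * (y * u' y) * s + y\<^sup>2 * (1 - y\<^sup>2) * u'' y"
    by (simp add: s_def algebra_simps power2_eq_square)
  also have "y\<^sup>2 * (1 - y\<^sup>2) * u'' y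
      = - ((real d - 3) - 2 * y\<^sup>2) * (y * u' y) - (real d - 2) * u y * (1 - (u y)\<^sup>2)"
    using ode[of y] y by (simp add: algebra_simps power2_eq_square power3_eq_cube)
  finally have "y * (4 * u' y + y * u'' y) * s
      = u y * (3 * real d - 15 - 6 * s - (real d - 2) * (1 - (u y)\<^sup>2))"
    unfolding u' by (simp add: s_def algebra_simps power2_eq_square)
  moreover have "(real d - 2) * (1 - (u y)\<^sup>2) \<le> real d - 2"
    using d mult_left_mono[of "1 - (u y)\<^sup>2" 1 "real d - 2"] by simp
  then have "0 < 3 * real d - 15 - 6 * s - (real d - 2) * (1 - (u y)\<^sup>2)"
    using s d by linarith
  ultimately have "0 < y * (4 * u' y + y * u'' y) * s" using pos by simp
  then show ?thesis using y s by (simp add: zero_less_mult_iff)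
qed

lemma u''_neg_at_critical_point:
  assumes y: "0 < y" "y < 1" and crit: "u' y = 0" and u: "0 < u y" "u y < 1"
  shows "u'' y < 0"
proof -
  have "(u y)\<^sup>2 < 1" using u by (simp add: abs_square_less_1)
  then have "0 < (real d - 2) * u y * (1 - (u y)\<^sup>2)" using d u by simp
  moreover have "y\<^sup>2 * (1 - y\<^sup>2) * u'' y + (real d - 2) * u y * (1 - (u y)\<^sup>2) = 0"
    using ode[of y] y crit by simp
  moreover have "0 < y\<^sup>2 * (1 - y\<^sup>2)" using y by (simp add: abs_square_less_1)
  ultimately show ?thesis by (smt (verit) mult_nonneg_nonneg)
qed

lemma invariant_eventually_at_right:
  assumes s: "0 < s" "s < 1" and inv: "invariant s"
  shows "eventually invariant (at_right s)"
proof -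
  have "isCont u s" "isCont u' s" "isCont cube_rate s"
    using s d1 d2 cube_rate_has_derivative[OF s] by (auto intro: DERIV_isCont)
  then have "eventually (\<lambda>t. u t < 1) (at s)" "eventually (\<lambda>t. u' t < 0) (at s)"
    "eventually (\<lambda>t. 0 < cube_rate t) (at s)"
    using inv unfolding isCont_def invariant_def by (auto dest: order_tendstoD)
  then have "eventually invariant (at s)"
    unfolding invariant_def by (auto intro: eventually_conj)
  then show ?thesis by (simp add: eventually_at_split)
qed

context
  fixes s :: real
  assumes s: "0 < s" "s < 1" and before: "\<And>t. 0 < t \<Longrightarrow> t < s \<Longrightarrow> invariant t"
begin

lemma limit_bounds_from_left: "u' s \<le> 0" "0 \<le> cube_rate s"
proof -
  have "isCont u' s" "isCont cube_rate s"
    using s d2[of s] cube_rate_has_derivative[OF s] by (auto intro: DERIV_isCont)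
  then have lim: "(u' \<longlongrightarrow> u' s) (at_left s)" "(cube_rate \<longlongrightarrow> cube_rate s) (at_left s)"
    unfolding isCont_def by (simp_all add: filterlim_at_split)
  have "eventually invariant (at_left s)"
    using eventually_at_left_real[OF s(1)] by eventually_elim (use before in auto)
  then have "eventually (\<lambda>t. u' t \<le> 0) (at_left s)" "eventually (\<lambda>t. 0 \<le> cube_rate t) (at_left s)"
    by (auto elim: eventually_mono simp: invariant_def)
  then show "u' s \<le> 0" "0 \<le> cube_rate s"
    using tendsto_upperbound[OF lim(1)] tendsto_lowerbound[OF lim(2)] by auto
qed

lemma u_bounds_from_left: "0 < u s" "u s < 1"
proof -
  have inv: "invariant (s / 2)" using before s by simp
  have "(s / 2) ^ 3 * u (s / 2) \<le> s ^ 3 * u s"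
    using before limit_bounds_from_left s
    by (intro cube_nondecreasing) (auto simp: invariant_def le_less)
  moreover have "0 < (s / 2) ^ 3 * u (s / 2)" using u_pos_if_invariant[OF _ inv] s by simp
  ultimately have "0 < s ^ 3 * u s" by linarith
  then show "0 < u s" using s by (simp add: zero_less_mult_iff)
  have "u s \<le> u (s / 2)"
  proof (rule DERIV_nonpos_imp_nonincreasing[of "s / 2" s u])
    fix t assume t: "s / 2 \<le> t" "t \<le> s"
    then have "u' t \<le> 0" using before limit_bounds_from_left s by (auto simp: invariant_def le_less)
    moreover have "t \<in> {0<..<1}" using t s by simp
    ultimately show "\<exists>l. (u has_real_derivative l) (at t) \<and> l \<le> 0" using d1 by blast
  qed (use s in simp)
  then show "u s < 1" using inv by (simp add: invariant_def)
qed

lemma invariant_from_left: "invariant s"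
proof -
  have "u' s < 0"
  proof (rule ccontr)
    assume "\<not> u' s < 0"
    then have "u' s = 0" using limit_bounds_from_left by simp
    then have "0 < - u'' s" using u''_neg_at_critical_point s u_bounds_from_left by simp
    then obtain t where "0 < t" "t < s" "- u' t < - u' s"
      using DERIV_pos_imp_less_left[OF DERIV_minus[OF d2]] s by force
    then show False using before[of t] \<open>u' s = 0\<close> by (simp add: invariant_def)
  qed
  moreover have "0 < cube_rate s"
  proof (rule ccontr)
    assume "\<not> 0 < cube_rate s"
    then have "cube_rate s = 0" using limit_bounds_from_left by simp
    then obtain t where "0 < t" "t < s" "cube_rate t < cube_rate s"
      using DERIV_pos_imp_less_left[OF cube_rate_has_derivative[OF s]]
        cube_rate_derivative_pos[OF s] u_bounds_from_left s by blast
    then show False using before[of t] \<open>cube_rate s = 0\<close> by (simp add: invariant_def)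
  qed
  ultimately show ?thesis using u_bounds_from_left by (simp add: invariant_def)
qed

end

lemma invariant_on_unit_interval:
  assumes "0 < y" "y < 1"
  shows "invariant y"
proof -
  obtain \<delta> where "0 < \<delta>" "\<And>t. 0 < t \<Longrightarrow> t < \<delta> \<Longrightarrow> invariant t"
    using invariant_near_zero by blast
  then show ?thesis
    using interval_induct_from_left[where P = invariant and b = 1] assms
      invariant_from_left invariant_eventually_at_right by blast
qed

lemma u_strict_decreasing:
  assumes "0 < x" "x < y" "y < 1"
  shows "u y < u x"
proof (rule DERIV_neg_imp_decreasing[of x y u])
  fix t assume "x \<le> t" "t \<le> y"
  then have t: "0 < t" "t < 1" using assms by auto
  then show "\<exists>l. (u has_real_derivative l) (at t) \<and> l < 0"
    using d1[of t] invariant_on_unit_interval[OF t] by (auto simp: invariant_def)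
qed (fact \<open>x < y\<close>)

lemma u_antimono:
  assumes "0 \<le> x" "x \<le> y" "y < 1"
  shows "u y \<le> u x"
proof -
  consider "x = y" | "x = 0" "0 < y" | "0 < x" "x < y" using assms by linarith
  then show ?thesis
  proof cases
    case 2
    then show ?thesis using invariant_on_unit_interval[of y] u0 assms by (simp add: invariant_def)
  next
    case 3
    then show ?thesis using u_strict_decreasing[of x y] assms by simp
  qed simp
qed

lemma u_lower_bound:
  assumes y: "1/2 \<le> y" "y < 1"
  shows "u (1/2) / 8 \<le> u y"
proof -
  have "(1/2) ^ 3 * u (1/2) \<le> y ^ 3 * u y"
  proof (rule cube_nondecreasing)
    fix t assume "1/2 \<le> t" "t \<le> y"
    then show "0 \<le> cube_rate t" using invariant_on_unit_interval[of t] y by (simp add: invariant_def)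
  qed (use y in auto)
  also have "\<dots> \<le> u y"
    using u_pos_if_invariant[OF _ invariant_on_unit_interval, of y] y
    by (intro mult_left_le_one_le) (auto simp: power_le_one)
  finally show ?thesis by (simp add: power3_eq_cube)
qed

lemma u_tendsto_at_left_one: "\<exists>L. (u \<longlongrightarrow> L) (at_left 1) \<and> 0 < L"
proof -
  have "\<exists>L. (u \<longlongrightarrow> L) (at_left 1) \<and> u (1/2) / 8 \<le> L"
  proof (rule antimono_bounded_tendsto_at_left[of "1/2"])
    fix x y :: real assume "1/2 < x" "x \<le> y" "y < 1"
    then show "u y \<le> u x" by (intro u_antimono) auto
  next
    fix x :: real assume "1/2 < x" "x < 1"
    then show "u (1/2) / 8 \<le> u x" by (intro u_lower_bound) auto
  qed simp
  moreover have "0 < u (1/2)" using u_pos_if_invariant[OF _ invariant_on_unit_interval] by simp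
  ultimately show ?thesis by force
qed

end

theorem lemma1:
  fixes d :: nat and a :: real and u u' u'' :: "real \<Rightarrow> real"
  assumes d: "d \<ge> 10" and a: "a > 0"
    and u0: "u 0 = 1"
    and d1: "\<And>y. y \<in> {0<..<1} \<Longrightarrow> (u has_real_derivative u' y) (at y)"
    and d2: "\<And>y. y \<in> {0<..<1} \<Longrightarrow> (u' has_real_derivative u'' y) (at y)"
    and ode: "\<And>y. y \<in> {0<..<1} \<Longrightarrow>
      y\<^sup>2 * (1 - y\<^sup>2) * u'' y + ((real d - 3) * y - 2 * y ^ 3) * u' y
        + (real d - 2) * u y * (1 - (u y)\<^sup>2) = 0"
    and expn: "(\<lambda>y. u y - (1 - a * y\<^sup>2)) \<in> O[at_right 0](\<lambda>y. y ^ 4)"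
  shows "(\<forall>x\<in>{0..<1}. \<forall>y\<in>{0..<1}. x \<le> y \<longrightarrow> u y \<le> u x)
         \<and> (\<exists>L. (u \<longlongrightarrow> L) (at_left 1) \<and> L > 0)"
proof -
  interpret self_similar_profile d a u u' u''
    by unfold_locales (use assms in auto)
  show ?thesis using u_antimono u_tendsto_at_left_one by auto
qed

end
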